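(* Let $M\ge3$, $\phi\in\mathrm{Hyp}^M$, $z_1\in\Sigma$, $A_1:=A(z_1)$, $\mu\ge1$, and let $K$ be sufficiently large (larger than some absolute constant). Let $h$ be the function from the preceding lemma, so that $\mathbf t(h(v,y),y)=v$ with $\mathbf t(z):=t^2_{z_1}(z_1,z)$. Define $$R_I:=\{z\in\Sigma:|t^2_{z_1}(z_1,z)|\le100\mu^{1/2}K^{-1}\},\qquad R_{II}:=\{z\in\Sigma:|A(z)-A_1|\le\mu^{1/2}K^{-3/4}\}.$$ Then $R_I$ is the union of the traces in $\Sigma$ of the curves $y\mapsto(h(v,y),y)$, $y\in[-1,1]$, with $|v|\le100\mu^{1/2}K^{-1}$; and if $z=(h(v,y),y)\in R_I\cap R_{II}$, then the tangent vector $X_z:=(h_y(v,y),1)$ satisfies $$|X_z-(-A_1,1)|\le3\mu^{1/2}K^{-3/4}.$$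
   Context: $\Sigma:=[-1,1]^2$, $2\Sigma:=[-2,2]^2$. $\mathrm{Hyp}^M$ ($M\ge3$) is the set of $\phi\in C^M(\Sigma)$ extending to a $C^M$ function on $2\Sigma$ with $\phi(0)=0$, $\nabla\phi(0)=0$, $D^2\phi(0)=\begin{pmatrix}0&1\\1&0\end{pmatrix}$, and $\sup_{2\Sigma}|\partial_x^a\partial_y^b\phi|\le10^{-5}$ for $3\le a+b\le M$. $H:=\phi_{xy}^2-\phi_{xx}\phi_{yy}$, $A:=\frac{\phi_{yy}}{\phi_{xy}+\sqrt H}$, and $t^2_{z_1}(z_1,z):=\phi_y(z)-\phi_y(z_1)-A(z_1)(\phi_x(z)-\phi_x(z_1))$. The preceding lemma provides $h:[\alpha,\beta]\times[-1,1]\to\mathbb R$ ($\alpha,\beta$ the min and max of $\mathbf t$ on $\Sigma$) with $\mathbf t(h(v,y),y)=v$, such that $(v,y)\mapsto(h(v,y),y)$ is a diffeomorphism onto a set containing $\Sigma$. *)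

theory Defs
  imports "HOL-Analysis.Analysis"
begin

definition Sq :: "(real \<times> real) set" where
  "Sq = {-1..1} \<times> {-1..1}"

definition Sq2 :: "(real \<times> real) set" where
  "Sq2 = {-2..2} \<times> {-2..2}"

fun Ck_on :: "nat \<Rightarrow> (real \<times> real) set \<Rightarrow> (real \<times> real \<Rightarrow> real) \<Rightarrow> bool" where
  "Ck_on 0 S f = continuous_on S f"
| "Ck_on (Suc k) S f =
     (\<exists>fx fy. (\<forall>p\<in>S. (f has_derivative (\<lambda>(a, b). fx p * a + fy p * b)) (at p within S))
              \<and> Ck_on k S fx \<and> Ck_on k S fy)"

definition Dx :: "(real \<times> real) set \<Rightarrow> (real \<times> real \<Rightarrow> real) \<Rightarrow> real \<times> real \<Rightarrow> real" where
  "Dx S f p = (SOME d. \<exists>e. (f has_derivative (\<lambda>(a, b). d * a + e * b)) (at p within S))"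

definition Dy :: "(real \<times> real) set \<Rightarrow> (real \<times> real \<Rightarrow> real) \<Rightarrow> real \<times> real \<Rightarrow> real" where
  "Dy S f p = (SOME e. \<exists>d. (f has_derivative (\<lambda>(a, b). d * a + e * b)) (at p within S))"

definition px :: "(real \<times> real \<Rightarrow> real) \<Rightarrow> real \<times> real \<Rightarrow> real" where
  "px \<phi> = Dx Sq2 \<phi>"
definition py :: "(real \<times> real \<Rightarrow> real) \<Rightarrow> real \<times> real \<Rightarrow> real" where
  "py \<phi> = Dy Sq2 \<phi>"
definition pxx :: "(real \<times> real \<Rightarrow> real) \<Rightarrow> real \<times> real \<Rightarrow> real" where
  "pxx \<phi> = Dx Sq2 (Dx Sq2 \<phi>)"
definition pxy :: "(real \<times> real \<Rightarrow> real) \<Rightarrow> real \<times> real \<Rightarrow> real" where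
  "pxy \<phi> = Dy Sq2 (Dx Sq2 \<phi>)"
definition pyx :: "(real \<times> real \<Rightarrow> real) \<Rightarrow> real \<times> real \<Rightarrow> real" where
  "pyx \<phi> = Dx Sq2 (Dy Sq2 \<phi>)"
definition pyy :: "(real \<times> real \<Rightarrow> real) \<Rightarrow> real \<times> real \<Rightarrow> real" where
  "pyy \<phi> = Dy Sq2 (Dy Sq2 \<phi>)"

definition Hyp :: "nat \<Rightarrow> (real \<times> real \<Rightarrow> real) \<Rightarrow> bool" where
  "Hyp M \<phi> \<longleftrightarrow>
     Ck_on M Sq2 \<phi> \<and>
     \<phi> (0, 0) = 0 \<and> px \<phi> (0, 0) = 0 \<and> py \<phi> (0, 0) = 0 \<and>
     pxx \<phi> (0, 0) = 0 \<and> pxy \<phi> (0, 0) = 1 \<and> pyx \<phi> (0, 0) = 1 \<and> pyy \<phi> (0, 0) = 0 \<and>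
     (\<forall>a b. 3 \<le> a + b \<and> a + b \<le> M \<longrightarrow>
        (\<forall>p\<in>Sq2. \<bar>((Dx Sq2 ^^ a) ((Dy Sq2 ^^ b) \<phi>)) p\<bar> \<le> 10 powr (-5)))"

definition Hdisc :: "(real \<times> real \<Rightarrow> real) \<Rightarrow> real \<times> real \<Rightarrow> real" where
  "Hdisc \<phi> p = (pxy \<phi> p)\<^sup>2 - pxx \<phi> p * pyy \<phi> p"

definition Afun :: "(real \<times> real \<Rightarrow> real) \<Rightarrow> real \<times> real \<Rightarrow> real" where
  "Afun \<phi> p = pyy \<phi> p / (pxy \<phi> p + sqrt (Hdisc \<phi> p))"

definition tt :: "(real \<times> real \<Rightarrow> real) \<Rightarrow> real \<times> real \<Rightarrow> real \<times> real \<Rightarrow> real" where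
  "tt \<phi> z1 z = py \<phi> z - py \<phi> z1 - Afun \<phi> z1 * (px \<phi> z - px \<phi> z1)"

definition talpha :: "(real \<times> real \<Rightarrow> real) \<Rightarrow> real \<times> real \<Rightarrow> real" where
  "talpha \<phi> z1 = (INF z\<in>Sq. tt \<phi> z1 z)"
definition tbeta :: "(real \<times> real \<Rightarrow> real) \<Rightarrow> real \<times> real \<Rightarrow> real" where
  "tbeta \<phi> z1 = (SUP z\<in>Sq. tt \<phi> z1 z)"

end

(*
  Along a curve y \<mapsto> (h(v, y), y) the function t = t^2_{z1}(z1, .) is constant, so
  differentiating gives (phi_xy - A1 phi_xx) h_y + (phi_yy - A1 phi_xy) = 0 at z = (h(v, y), y).
  The slope A(z) is the small root of phi_xx X^2 - 2 phi_xy X + phi_yy; substituting A1 into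
  this quadratic turns the tangency relation into |h_y + A1| <= 3 |A(z) - A1|, as soon as the
  Hessian of phi stays within 10^-3 of [[0, 1], [1, 0]] on Sigma. That closeness follows from
  the bound 10^-5 on third derivatives by the mean value theorem; since Hyp^M only bounds the
  derivatives d_x^a d_y^b phi, the symmetry of mixed partials is needed to control the
  gradients of all second derivatives. The description of R_I is bookkeeping for the
  parametrisation (v, y) \<mapsto> (h(v, y), y).
*)

theory Submission
  imports Defs
begin

lemma has_field_derivative_partial_x:
  assumes "(f has_derivative (\<lambda>(a, b). A * a + B * b)) (at (x, y) within S)"
    and "(\<lambda>s. (s, y)) ` T \<subseteq> S"
  shows "((\<lambda>s. f (s, y)) has_real_derivative A) (at x within T)"
proof -
  have "((\<lambda>s. (s, y)) has_derivative (\<lambda>d. (d, 0))) (at x within T)"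
    by (auto intro!: derivative_eq_intros)
  then have "((\<lambda>s. f (s, y)) has_derivative (\<lambda>d. (\<lambda>(a, b). A * a + B * b) (d, 0))) (at x within T)"
    by (rule has_derivative_in_compose) (use assms has_derivative_subset in blast)
  then show ?thesis
    by (simp add: has_field_derivative_def mult_commute_abs)
qed

lemma has_field_derivative_partial_y:
  assumes "(f has_derivative (\<lambda>(a, b). A * a + B * b)) (at (x, y) within S)"
    and "(\<lambda>t. (x, t)) ` T \<subseteq> S"
  shows "((\<lambda>t. f (x, t)) has_real_derivative B) (at y within T)"
proof -
  have "((\<lambda>t. (x, t)) has_derivative (\<lambda>d. (0, d))) (at y within T)"
    by (auto intro!: derivative_eq_intros)
  then have "((\<lambda>t. f (x, t)) has_derivative (\<lambda>d. (\<lambda>(a, b). A * a + B * b) (0, d))) (at y within T)"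
    by (rule has_derivative_in_compose) (use assms has_derivative_subset in blast)
  then show ?thesis
    by (simp add: has_field_derivative_def mult_commute_abs)
qed

lemma Dx_Dy_eq:
  assumes "(f has_derivative (\<lambda>(a, b). A * a + B * b)) (at p)" "p \<in> interior S"
  shows "Dx S f p = A" "Dy S f p = B"
proof -
  have unique: "C = A \<and> D = B"
    if "(f has_derivative (\<lambda>(a, b). C * a + D * b)) (at p within S)" for C D
  proof -
    have "(f has_derivative (\<lambda>(a, b). C * a + D * b)) (at p)"
      using that at_within_interior[OF assms(2)] by simp
    then have "(\<lambda>(a, b). C * a + D * b) = (\<lambda>(a::real, b::real). A * a + B * b)"
      using assms(1) by (rule has_derivative_unique)
    from fun_cong[OF this, of "(1, 0)"] fun_cong[OF this, of "(0, 1)"] show ?thesis by simp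
  qed
  have "(f has_derivative (\<lambda>(a, b). A * a + B * b)) (at p within S)"
    using assms(1) at_within_interior[OF assms(2)] by simp
  then show "Dx S f p = A" "Dy S f p = B"
    unfolding Dx_def Dy_def using unique by (blast intro: some_equality)+
qed

lemma Dx_Dy_cong_interior:
  assumes "\<And>q. q \<in> interior S \<Longrightarrow> f q = g q" "p \<in> interior S"
  shows "Dx S f p = Dx S g p" "Dy S f p = Dy S g p"
proof -
  have "(f has_derivative F) (at p within S) \<longleftrightarrow> (g has_derivative F) (at p within S)" for F
  proof
    show "(g has_derivative F) (at p within S)" if "(f has_derivative F) (at p within S)"
      using has_derivative_transform_within_open[OF that open_interior assms(2)] assms(1) by simp
    show "(f has_derivative F) (at p within S)" if "(g has_derivative F) (at p within S)"
      using has_derivative_transform_within_open[OF that open_interior assms(2)] assms(1) by simp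
  qed
  then show "Dx S f p = Dx S g p" "Dy S f p = Dy S g p"
    unfolding Dx_def Dy_def by simp_all
qed

lemma level_curve_tangent:
  fixes G :: "real \<times> real \<Rightarrow> real"
  assumes dG: "(G has_derivative (\<lambda>(u, w). Gx * u + Gy * w)) (at (g y, y))"
    and dg: "(g has_real_derivative g') (at y within {a..b})"
    and "a < b" "y \<in> {a..b}"
    and level: "\<And>t. t \<in> {a..b} \<Longrightarrow> G (g t, t) = c"
  shows "Gx * g' + Gy = 0"
proof -
  have "((\<lambda>t. (g t, t)) has_derivative (\<lambda>d. (g' * d, d))) (at y within {a..b})"
    using dg by (auto intro!: derivative_eq_intros simp: has_field_derivative_def mult.commute)
  from has_derivative_compose[OF this dG]
  have "((\<lambda>t. G (g t, t)) has_derivative (\<lambda>d. Gx * (g' * d) + Gy * d)) (at y within {a..b})"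
    by simp
  then have "((\<lambda>t. c) has_derivative (\<lambda>d. Gx * (g' * d) + Gy * d)) (at y within {a..b})"
    by (rule has_derivative_transform_within[OF _ zero_less_one \<open>y \<in> {a..b}\<close>]) (simp add: level)
  then have "(\<lambda>d. Gx * (g' * d) + Gy * d) = (\<lambda>d. 0)"
    using frechet_derivative_unique_within_closed_interval[of a b y "\<lambda>t. c"] \<open>a < b\<close> \<open>y \<in> {a..b}\<close>
    by (simp add: cbox_interval)
  from fun_cong[OF this, of 1] show ?thesis by simp
qed

lemma abs_diff_origin_le_Sq:
  assumes dg: "\<And>q. q \<in> Sq \<Longrightarrow> (g has_derivative (\<lambda>(a, b). gx q * a + gy q * b)) (at q)"
    and gx: "\<And>q. q \<in> Sq \<Longrightarrow> \<bar>gx q\<bar> \<le> B" and gy: "\<And>q. q \<in> Sq \<Longrightarrow> \<bar>gy q\<bar> \<le> B"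
    and "(x, y) \<in> Sq"
  shows "\<bar>g (x, y) - g (0, 0)\<bar> \<le> 2 * B"
proof -
  have x: "x \<in> {-1..1}" and y: "y \<in> {-1..1}"
    using \<open>(x, y) \<in> Sq\<close> by (auto simp: Sq_def)
  have Sq: "(s, t) \<in> Sq" if "s \<in> {-1..1}" "t \<in> {-1..1}" for s t
    using that by (simp add: Sq_def)
  have "norm (g (x, 0) - g (0, 0)) \<le> B * norm (x - 0)"
  proof (rule field_differentiable_bound[of "{-1..1}" "\<lambda>s. g (s, 0)" "\<lambda>s. gx (s, 0)"])
    fix s :: real assume "s \<in> {-1..1}"
    then have "(s, 0) \<in> Sq" by (intro Sq) auto
    then show "((\<lambda>s. g (s, 0)) has_real_derivative gx (s, 0)) (at s within {-1..1})"
      "norm (gx (s, 0)) \<le> B"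
      using has_field_derivative_partial_x[OF dg[of "(s, 0)"], of "{-1..1}"] gx by auto
  qed (use x in auto)
  moreover have "norm (g (x, y) - g (x, 0)) \<le> B * norm (y - 0)"
  proof (rule field_differentiable_bound[of "{-1..1}" "\<lambda>t. g (x, t)" "\<lambda>t. gy (x, t)"])
    fix t :: real assume "t \<in> {-1..1}"
    then have "(x, t) \<in> Sq" using x by (intro Sq) auto
    then show "((\<lambda>t. g (x, t)) has_real_derivative gy (x, t)) (at t within {-1..1})"
      "norm (gy (x, t)) \<le> B"
      using has_field_derivative_partial_y[OF dg[of "(x, t)"], of "{-1..1}"] gy by auto
  qed (use y in auto)
  moreover have "B \<ge> 0"
    using gx[of "(0, 0)"] by (simp add: Sq_def)
  then have "B * \<bar>x\<bar> \<le> B" "B * \<bar>y\<bar> \<le> B"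
    using x y by (auto intro: mult_left_le)
  ultimately show ?thesis by simp
qed

section \<open>Symmetry of mixed partial derivatives\<close>

lemma second_difference_mean_value:
  fixes f f1 f12 :: "real \<Rightarrow> real \<Rightarrow> real"
  assumes "a < b" "c < d"
    and f1: "\<And>s t. s \<in> {a..b} \<Longrightarrow> t \<in> {c..d} \<Longrightarrow> ((\<lambda>s. f s t) has_real_derivative f1 s t) (at s)"
    and f12: "\<And>s t. s \<in> {a..b} \<Longrightarrow> t \<in> {c..d} \<Longrightarrow> ((\<lambda>t. f1 s t) has_real_derivative f12 s t) (at t)"
  obtains \<xi> \<eta> where "a < \<xi>" "\<xi> < b" "c < \<eta>" "\<eta> < d"
    "f b d - f b c - f a d + f a c = (b - a) * (d - c) * f12 \<xi> \<eta>"
proof -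
  have "\<exists>\<xi>>a. \<xi> < b \<and> (f b d - f b c) - (f a d - f a c) = (b - a) * (f1 \<xi> d - f1 \<xi> c)"
    using \<open>c < d\<close> by (intro MVT2 \<open>a < b\<close> DERIV_diff f1) auto
  then obtain \<xi> where \<xi>: "a < \<xi>" "\<xi> < b"
    and "(f b d - f b c) - (f a d - f a c) = (b - a) * (f1 \<xi> d - f1 \<xi> c)"
    by blast
  moreover obtain \<eta> where "c < \<eta>" "\<eta> < d" "f1 \<xi> d - f1 \<xi> c = (d - c) * f12 \<xi> \<eta>"
    using MVT2[of c d "f1 \<xi>" "f12 \<xi>"] \<open>c < d\<close> \<xi> f12 by auto
  ultimately show ?thesis
    by (intro that[of \<xi> \<eta>]) (auto simp: algebra_simps)
qed

lemma mixed_partials_agree_on_square: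
  fixes f fx fy fxx fxy fyx fyy :: "real \<times> real \<Rightarrow> real"
  assumes "h > 0" and square: "\<And>s t. s \<in> {x..x + h} \<Longrightarrow> t \<in> {y..y + h} \<Longrightarrow> (s, t) \<in> U"
    and df: "\<And>q. q \<in> U \<Longrightarrow> (f has_derivative (\<lambda>(a, b). fx q * a + fy q * b)) (at q)"
    and dfx: "\<And>q. q \<in> U \<Longrightarrow> (fx has_derivative (\<lambda>(a, b). fxx q * a + fxy q * b)) (at q)"
    and dfy: "\<And>q. q \<in> U \<Longrightarrow> (fy has_derivative (\<lambda>(a, b). fyx q * a + fyy q * b)) (at q)"
  obtains \<xi> \<eta> \<xi>' \<eta>' where "\<xi> \<in> {x..x + h}" "\<eta> \<in> {y..y + h}" "\<xi>' \<in> {x..x + h}" "\<eta>' \<in> {y..y + h}"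
    "fxy (\<xi>, \<eta>) = fyx (\<xi>', \<eta>')"
proof -
  have lines: "((\<lambda>s. f (s, t)) has_real_derivative fx (s, t)) (at s)"
    "((\<lambda>t. fx (s, t)) has_real_derivative fxy (s, t)) (at t)"
    "((\<lambda>t. f (s, t)) has_real_derivative fy (s, t)) (at t)"
    "((\<lambda>s. fy (s, t)) has_real_derivative fyx (s, t)) (at s)"
    if "s \<in> {x..x + h}" "t \<in> {y..y + h}" for s t
    using square[OF that]
    by (auto intro: has_field_derivative_partial_x has_field_derivative_partial_y df dfx dfy)
  obtain \<xi> \<eta> where "x < \<xi>" "\<xi> < x + h" "y < \<eta>" "\<eta> < y + h"
    and \<xi>\<eta>: "f (x + h, y + h) - f (x + h, y) - f (x, y + h) + f (x, y) = (x + h - x) * (y + h - y) * fxy (\<xi>, \<eta>)"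
    using second_difference_mean_value[of x "x + h" y "y + h" "\<lambda>s t. f (s, t)" "\<lambda>s t. fx (s, t)"
        "\<lambda>s t. fxy (s, t)", OF _ _ lines(1) lines(2)] \<open>h > 0\<close> by auto
  moreover obtain \<eta>' \<xi>' where "y < \<eta>'" "\<eta>' < y + h" "x < \<xi>'" "\<xi>' < x + h"
    and \<xi>\<eta>': "f (x + h, y + h) - f (x, y + h) - f (x + h, y) + f (x, y) = (y + h - y) * (x + h - x) * fyx (\<xi>', \<eta>')"
    using second_difference_mean_value[of y "y + h" x "x + h" "\<lambda>t s. f (s, t)" "\<lambda>t s. fy (s, t)"
        "\<lambda>t s. fyx (s, t)", OF _ _ lines(3) lines(4)] \<open>h > 0\<close> by auto
  moreover have "fxy (\<xi>, \<eta>) = fyx (\<xi>', \<eta>')"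
    using \<xi>\<eta> \<xi>\<eta>' \<open>h > 0\<close> by (simp add: algebra_simps)
  ultimately show ?thesis
    by (intro that[of \<xi> \<eta> \<xi>' \<eta>']) auto
qed

lemma mixed_partials_eq:
  fixes f fx fy fxx fxy fyx fyy :: "real \<times> real \<Rightarrow> real"
  assumes "open U" "p \<in> U"
    and df: "\<And>q. q \<in> U \<Longrightarrow> (f has_derivative (\<lambda>(a, b). fx q * a + fy q * b)) (at q)"
    and dfx: "\<And>q. q \<in> U \<Longrightarrow> (fx has_derivative (\<lambda>(a, b). fxx q * a + fxy q * b)) (at q)"
    and dfy: "\<And>q. q \<in> U \<Longrightarrow> (fy has_derivative (\<lambda>(a, b). fyx q * a + fyy q * b)) (at q)"
    and "continuous (at p) fxy" "continuous (at p) fyx"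
  shows "fxy p = fyx p"
proof (rule ccontr)
  assume "fxy p \<noteq> fyx p"
  define e where "e = \<bar>fxy p - fyx p\<bar> / 2"
  have "e > 0" using \<open>fxy p \<noteq> fyx p\<close> by (simp add: e_def)
  have "\<forall>\<^sub>F q in at p. q \<in> U \<and> dist (fxy q) (fxy p) < e \<and> dist (fyx q) (fyx p) < e"
    using \<open>e > 0\<close> assms(6,7) eventually_at_in_open'[OF assms(1,2)]
    by (auto simp: continuous_at tendsto_iff elim: eventually_elim2 eventually_mono intro!: eventually_conj)
  then obtain r where "r > 0"
    and r: "\<And>q. dist q p < r \<Longrightarrow> q \<in> U \<and> dist (fxy q) (fxy p) < e \<and> dist (fyx q) (fyx p) < e"
    using \<open>p \<in> U\<close> \<open>e > 0\<close> by (auto simp: eventually_at) (metis dist_self)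
  obtain x y where p: "p = (x, y)" by fastforce
  have near: "dist (s, t) p < r" if "s \<in> {x..x + r / 3}" "t \<in> {y..y + r / 3}" for s t
  proof -
    have "dist (s, t) p \<le> \<bar>s - x\<bar> + \<bar>t - y\<bar>"
      using sqrt_sum_squares_le_sum_abs[of "s - x" "t - y"]
      by (simp add: p dist_Pair_Pair dist_real_def)
    then show ?thesis using that \<open>r > 0\<close> by simp
  qed
  have "r / 3 > 0" using \<open>r > 0\<close> by simp
  then obtain \<xi> \<eta> \<xi>' \<eta>' where "\<xi> \<in> {x..x + r / 3}" "\<eta> \<in> {y..y + r / 3}"
    "\<xi>' \<in> {x..x + r / 3}" "\<eta>' \<in> {y..y + r / 3}" and eq: "fxy (\<xi>, \<eta>) = fyx (\<xi>', \<eta>')"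
    by (rule mixed_partials_agree_on_square[of "r / 3" x y U, OF _ _ df dfx dfy]) (use near r in blast)+
  then have "dist (fxy (\<xi>, \<eta>)) (fxy p) < e" "dist (fyx (\<xi>', \<eta>')) (fyx p) < e"
    using near r by blast+
  then show False
    using eq by (auto simp: dist_real_def e_def abs_if split: if_splits)
qed

lemma Ck_on_continuous_on:
  assumes "Ck_on k S f"
  shows "continuous_on S f"
proof (cases k)
  case 0
  then show ?thesis using assms by simp
next
  case (Suc k')
  then obtain fx fy where "\<forall>p\<in>S. (f has_derivative (\<lambda>(a, b). fx p * a + fy p * b)) (at p within S)"
    using assms by auto
  then show ?thesis
    unfolding continuous_on_eq_continuous_within using has_derivative_continuous by blast
qed

lemma Ck_on_Suc_imp_Ck_on: "Ck_on (Suc k) S f \<Longrightarrow> Ck_on k S f"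
proof (induction k arbitrary: f)
  case 0
  then show ?case using Ck_on_continuous_on by (simp only: Ck_on.simps(1))
next
  case (Suc k)
  obtain fx fy where d: "\<forall>p\<in>S. (f has_derivative (\<lambda>(a, b). fx p * a + fy p * b)) (at p within S)"
    and "Ck_on (Suc k) S fx" "Ck_on (Suc k) S fy"
    using Suc.prems unfolding Ck_on.simps(2)[of "Suc k"] by blast
  then have "Ck_on k S fx" "Ck_on k S fy" using Suc.IH by blast+
  then show ?case unfolding Ck_on.simps(2)[of k] using d by blast
qed

lemma Ck_on_mono: "Ck_on m S f \<Longrightarrow> k \<le> m \<Longrightarrow> Ck_on k S f"
proof (induction m)
  case 0
  then show ?case by simp
next
  case (Suc m)
  show ?case
  proof (cases "k = Suc m")
    case True
    then show ?thesis using Suc.prems(1) by blast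
  next
    case False
    then have "k \<le> m" using Suc.prems(2) by simp
    then show ?thesis using Suc.IH Suc.prems(1) Ck_on_Suc_imp_Ck_on by blast
  qed
qed

text \<open>Dx S and Dy S are only determined at interior points of S, so smoothness is tracked
  up to changes off the interior; unlike Ck_on, this class is closed under Dx S and Dy S.\<close>

definition Ck_inside :: "nat \<Rightarrow> (real \<times> real) set \<Rightarrow> (real \<times> real \<Rightarrow> real) \<Rightarrow> bool" where
  "Ck_inside k S f \<longleftrightarrow> (\<exists>g. Ck_on k S g \<and> (\<forall>p\<in>interior S. f p = g p))"

lemma Ck_inside_mono:
  assumes "Ck_inside m S f" "k \<le> m"
  shows "Ck_inside k S f"
proof -
  obtain g where "Ck_on m S g" "\<forall>p\<in>interior S. f p = g p"
    using assms(1) unfolding Ck_inside_def by blast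
  moreover have "Ck_on k S g"
    using Ck_on_mono[OF \<open>Ck_on m S g\<close> assms(2)] .
  ultimately show ?thesis
    unfolding Ck_inside_def by blast
qed

lemma Ck_inside_continuous:
  assumes "Ck_inside k S f" "p \<in> interior S"
  shows "continuous (at p) f"
proof -
  obtain g where g: "Ck_on k S g" and fg: "\<forall>q\<in>interior S. f q = g q"
    using assms(1) unfolding Ck_inside_def by blast
  have "continuous_on S g"
    using g by (rule Ck_on_continuous_on)
  then have "continuous_on (interior S) g"
    by (rule continuous_on_subset[OF _ interior_subset])
  then have "continuous_on (interior S) f"
    using continuous_on_cong[OF refl, of "interior S" f g] fg by blast
  then show ?thesis
    using continuous_on_interior[of "interior S" f p] assms(2) by simp
qed

lemma Ck_inside_Suc_has_derivative:
  assumes "Ck_inside (Suc k) S f" "p \<in> interior S"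
  shows "(f has_derivative (\<lambda>(a, b). Dx S f p * a + Dy S f p * b)) (at p)"
proof -
  obtain g gx gy where fg: "\<forall>q\<in>interior S. f q = g q"
    and dg: "\<forall>q\<in>S. (g has_derivative (\<lambda>(a, b). gx q * a + gy q * b)) (at q within S)"
    using assms(1) unfolding Ck_inside_def Ck_on.simps(2) by blast
  have "(g has_derivative (\<lambda>(a, b). gx p * a + gy p * b)) (at p)"
    using dg[rule_format, OF interior_subset[THEN subsetD, OF assms(2)]]
    unfolding at_within_interior[OF assms(2)] .
  then have df: "(f has_derivative (\<lambda>(a, b). gx p * a + gy p * b)) (at p)"
    using has_derivative_transform_within_open[OF _ open_interior assms(2), of g _ UNIV f] fg by simp
  show ?thesis
    using Dx_Dy_eq[OF df assms(2)] df by simp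
qed

lemma Ck_inside_Suc_partials:
  assumes "Ck_inside (Suc k) S f"
  shows "Ck_inside k S (Dx S f)" "Ck_inside k S (Dy S f)"
proof -
  obtain g gx gy where fg: "\<forall>q\<in>interior S. f q = g q"
    and dg: "\<forall>q\<in>S. (g has_derivative (\<lambda>(a, b). gx q * a + gy q * b)) (at q within S)"
    and "Ck_on k S gx" "Ck_on k S gy"
    using assms unfolding Ck_inside_def Ck_on.simps(2) by blast
  have "Dx S f p = gx p \<and> Dy S f p = gy p" if p: "p \<in> interior S" for p
  proof -
    have "(g has_derivative (\<lambda>(a, b). gx p * a + gy p * b)) (at p)"
      using dg[rule_format, OF interior_subset[THEN subsetD, OF p]]
      unfolding at_within_interior[OF p] .
    then show ?thesis
      using Dx_Dy_eq[of g, OF _ p] Dx_Dy_cong_interior[of S f g, OF _ p] fg by simp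
  qed
  then show "Ck_inside k S (Dx S f)" "Ck_inside k S (Dy S f)"
    unfolding Ck_inside_def using \<open>Ck_on k S gx\<close> \<open>Ck_on k S gy\<close> by blast+
qed

lemma Ck_inside_mixed_partials_eq:
  assumes "Ck_inside 2 S f" "p \<in> interior S"
  shows "Dy S (Dx S f) p = Dx S (Dy S f) p"
proof -
  have f2: "Ck_inside (Suc (Suc 0)) S f"
    using assms(1) by (simp add: numeral_2_eq_2)
  have f1: "Ck_inside (Suc 0) S (Dx S f)" "Ck_inside (Suc 0) S (Dy S f)"
    using Ck_inside_Suc_partials[OF f2] by simp_all
  show ?thesis
  proof (rule mixed_partials_eq[OF open_interior assms(2)])
    fix q assume q: "q \<in> interior S"
    show "(f has_derivative (\<lambda>(a, b). Dx S f q * a + Dy S f q * b)) (at q)"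
      using Ck_inside_Suc_has_derivative[OF f2 q] .
    show "(Dx S f has_derivative (\<lambda>(a, b). Dx S (Dx S f) q * a + Dy S (Dx S f) q * b)) (at q)"
      using Ck_inside_Suc_has_derivative[OF f1(1) q] .
    show "(Dy S f has_derivative (\<lambda>(a, b). Dx S (Dy S f) q * a + Dy S (Dy S f) q * b)) (at q)"
      using Ck_inside_Suc_has_derivative[OF f1(2) q] .
  next
    show "continuous (at p) (Dy S (Dx S f))" "continuous (at p) (Dx S (Dy S f))"
      using Ck_inside_continuous[OF Ck_inside_Suc_partials(2)[OF f1(1)] assms(2)]
        Ck_inside_continuous[OF Ck_inside_Suc_partials(1)[OF f1(2)] assms(2)] .
  qed
qed

lemma Ck_inside_3_hessian_gradients:
  assumes "Ck_inside 3 S f" "p \<in> interior S"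
  shows "(Dx S (Dx S f) has_derivative
          (\<lambda>(a, b). Dx S (Dx S (Dx S f)) p * a + Dx S (Dx S (Dy S f)) p * b)) (at p)"
    and "(Dy S (Dx S f) has_derivative
          (\<lambda>(a, b). Dx S (Dx S (Dy S f)) p * a + Dx S (Dy S (Dy S f)) p * b)) (at p)"
    and "(Dy S (Dy S f) has_derivative
          (\<lambda>(a, b). Dx S (Dy S (Dy S f)) p * a + Dy S (Dy S (Dy S f)) p * b)) (at p)"
proof -
  let ?fx = "Dx S f" and ?fy = "Dy S f"
  have f2: "Ck_inside 2 S ?fx" "Ck_inside 2 S ?fy"
    using Ck_inside_Suc_partials[of 2 S f] assms(1) by (simp_all add: numeral_3_eq_3 numeral_2_eq_2)
  have f1: "Ck_inside (Suc 0) S (Dx S ?fx)" "Ck_inside (Suc 0) S (Dy S ?fx)"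
    "Ck_inside (Suc 0) S (Dy S ?fy)"
    using Ck_inside_Suc_partials[of 1 S ?fx] Ck_inside_Suc_partials[of 1 S ?fy] f2
    by (simp_all add: numeral_2_eq_2)
  have sym: "\<And>q. q \<in> interior S \<Longrightarrow> Dy S ?fx q = Dx S ?fy q"
    using Ck_inside_mixed_partials_eq[OF Ck_inside_mono[OF assms(1)]] by simp
  have xxy: "Dy S (Dx S ?fx) p = Dx S (Dx S ?fy) p"
    using Ck_inside_mixed_partials_eq[OF f2(1) assms(2)] Dx_Dy_cong_interior(1)[OF sym assms(2)]
    by simp
  have xyy: "Dy S (Dy S ?fx) p = Dx S (Dy S ?fy) p"
    using Ck_inside_mixed_partials_eq[OF f2(2) assms(2)] Dx_Dy_cong_interior(2)[OF sym assms(2)]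
    by simp
  show "(Dx S ?fx has_derivative
          (\<lambda>(a, b). Dx S (Dx S ?fx) p * a + Dx S (Dx S ?fy) p * b)) (at p)"
    using Ck_inside_Suc_has_derivative[OF f1(1) assms(2)] xxy by simp
  show "(Dy S ?fx has_derivative
          (\<lambda>(a, b). Dx S (Dx S ?fy) p * a + Dx S (Dy S ?fy) p * b)) (at p)"
    using Ck_inside_Suc_has_derivative[OF f1(2) assms(2)] xyy
      Dx_Dy_cong_interior(1)[OF sym assms(2)] by simp
  show "(Dy S ?fy has_derivative
          (\<lambda>(a, b). Dx S (Dy S ?fy) p * a + Dy S (Dy S ?fy) p * b)) (at p)"
    using Ck_inside_Suc_has_derivative[OF f1(3) assms(2)] .
qed

section \<open>The slope A as a root of a quadratic\<close>

lemma small_root_quadratic: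
  fixes a c d :: real
  assumes "\<bar>a\<bar> \<le> 1/1000" "\<bar>c - 1\<bar> \<le> 1/1000" "\<bar>d\<bar> \<le> 1/1000"
  defines "A \<equiv> d / (c + sqrt (c\<^sup>2 - a * d))"
  shows "\<bar>A\<bar> \<le> 2/1000" "a * A\<^sup>2 - 2 * c * A + d = 0"
proof -
  define s where "s = sqrt (c\<^sup>2 - a * d)"
  have "\<bar>a * d\<bar> \<le> 1/1000 * (1/1000)"
    unfolding abs_mult using assms(1,3) by (intro mult_mono) auto
  moreover have "c \<ge> 999/1000"
    using assms(2) by linarith
  then have "c\<^sup>2 \<ge> (999/1000)\<^sup>2"
    by (intro power_mono) auto
  ultimately have "c\<^sup>2 - a * d \<ge> 0"
    by (simp add: power2_eq_square abs_le_iff)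
  then have "s \<ge> 0" and s2: "s\<^sup>2 = c\<^sup>2 - a * d"
    by (simp_all add: s_def)
  have cs: "c + s \<ge> 999/1000"
    using \<open>s \<ge> 0\<close> assms(2) by linarith
  have Acs: "A * (c + s) = d"
    using cs by (simp add: A_def s_def[symmetric])
  have "\<bar>A\<bar> * (999/1000) \<le> \<bar>A\<bar> * (c + s)"
    using cs by (intro mult_left_mono) auto
  also have "\<dots> = \<bar>d\<bar>"
    using cs by (simp add: Acs[symmetric] abs_mult)
  finally show "\<bar>A\<bar> \<le> 2/1000"
    using assms(3) by linarith
  have "a * A * (c + s) = a * d"
    using Acs by (simp add: mult.assoc)
  also have "\<dots> = (c - s) * (c + s)"
    using s2 by (simp add: algebra_simps power2_eq_square)
  finally have "a * A * (c + s) = (c - s) * (c + s)" .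
  then have aA: "a * A = c - s"
    using cs by simp
  have "a * A\<^sup>2 - 2 * c * A + d = A * (a * A) - 2 * c * A + A * (c + s)"
    using Acs by (simp add: power2_eq_square algebra_simps)
  also have "\<dots> = 0"
    unfolding aA by (simp add: algebra_simps)
  finally show "a * A\<^sup>2 - 2 * c * A + d = 0" .
qed

lemma slope_perturbation_bound:
  fixes a c d A1 s :: real
  assumes bounds: "\<bar>a\<bar> \<le> 1/1000" "\<bar>c - 1\<bar> \<le> 1/1000" "\<bar>d\<bar> \<le> 1/1000" "\<bar>A1\<bar> \<le> 2/1000"
    and tangent: "(c - A1 * a) * s + (d - A1 * c) = 0"
  shows "\<bar>s + A1\<bar> \<le> 3 * \<bar>d / (c + sqrt (c\<^sup>2 - a * d)) - A1\<bar>"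
proof -
  define A where "A = d / (c + sqrt (c\<^sup>2 - a * d))"
  have A: "\<bar>A\<bar> \<le> 2/1000" "a * A\<^sup>2 - 2 * c * A + d = 0"
    using small_root_quadratic[OF bounds(1-3)] by (simp_all add: A_def)
  define D where "D = c - A1 * a"
  have "\<bar>A1 * a\<bar> \<le> 2/1000 * (1/1000)"
    unfolding abs_mult using bounds(1,4) by (intro mult_mono) auto
  then have D: "D \<ge> 99/100"
    unfolding D_def using bounds(2) abs_le_iff[of "A1 * a"] abs_le_iff[of "c - 1"] by linarith
  \<comment> \<open>A is a root of a X^2 - 2 c X + d, so the value of this quadratic at A1 has the factor A1 - A.\<close>
  have "(s + A1) * D = - (a * A1\<^sup>2 - 2 * c * A1 + d)"
    using tangent unfolding D_def power2_eq_square by algebra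
  then have "s + A1 = - (a * A1\<^sup>2 - 2 * c * A1 + d) / D"
    using D by (simp add: eq_divide_eq)
  also have "a * A1\<^sup>2 - 2 * c * A1 + d = (A1 - A) * (a * (A1 + A) - 2 * c)"
    using A(2) by (simp add: algebra_simps power2_eq_square)
  finally have "\<bar>s + A1\<bar> = \<bar>A1 - A\<bar> * \<bar>a * (A1 + A) - 2 * c\<bar> / D"
    using D by (simp add: abs_mult abs_minus_cancel)
  also have "\<dots> \<le> \<bar>A1 - A\<bar> * (297/100) / (99/100)"
  proof (intro frac_le mult_left_mono)
    have "\<bar>a * (A1 + A)\<bar> \<le> 1/1000 * (4/1000)"
      unfolding abs_mult using A(1) bounds(1,4) abs_triangle_ineq[of A1 A] by (intro mult_mono) auto
    then show "\<bar>a * (A1 + A) - 2 * c\<bar> \<le> 297/100"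
      using bounds(2) abs_le_iff[of "a * (A1 + A)"] abs_le_iff[of "c - 1"]
        abs_le_iff[of "a * (A1 + A) - 2 * c"] by linarith
  qed (use D in auto)
  also have "\<dots> = 3 * \<bar>A - A1\<bar>"
    by (simp add: abs_minus_commute)
  finally show ?thesis
    unfolding A_def .
qed

lemma Sq_subset_interior_Sq2: "Sq \<subseteq> interior Sq2"
  by (auto simp: Sq_def Sq2_def interior_Times)

lemma Hyp_Ck_inside_3:
  assumes "3 \<le> M" "Hyp M \<phi>"
  shows "Ck_inside 3 Sq2 \<phi>"
  unfolding Ck_inside_def using assms Ck_on_mono[of M Sq2 \<phi> 3] by (auto simp: Hyp_def)

lemma Hyp_third_partials_bound:
  assumes "3 \<le> M" "Hyp M \<phi>" "p \<in> Sq2"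
  shows "\<bar>Dx Sq2 (Dx Sq2 (Dx Sq2 \<phi>)) p\<bar> \<le> 10 powr -5"
    and "\<bar>Dx Sq2 (Dx Sq2 (Dy Sq2 \<phi>)) p\<bar> \<le> 10 powr -5"
    and "\<bar>Dx Sq2 (Dy Sq2 (Dy Sq2 \<phi>)) p\<bar> \<le> 10 powr -5"
    and "\<bar>Dy Sq2 (Dy Sq2 (Dy Sq2 \<phi>)) p\<bar> \<le> 10 powr -5"
proof -
  have bound: "\<bar>((Dx Sq2 ^^ a) ((Dy Sq2 ^^ b) \<phi>)) p\<bar> \<le> 10 powr -5" if "a + b = 3" for a b
    using assms that unfolding Hyp_def by auto
  show "\<bar>Dx Sq2 (Dx Sq2 (Dx Sq2 \<phi>)) p\<bar> \<le> 10 powr -5"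
    using bound[of 3 0] by (simp add: numeral_3_eq_3)
  show "\<bar>Dx Sq2 (Dx Sq2 (Dy Sq2 \<phi>)) p\<bar> \<le> 10 powr -5"
    using bound[of 2 1] by (simp add: numeral_2_eq_2)
  show "\<bar>Dx Sq2 (Dy Sq2 (Dy Sq2 \<phi>)) p\<bar> \<le> 10 powr -5"
    using bound[of 1 2] by (simp add: numeral_2_eq_2)
  show "\<bar>Dy Sq2 (Dy Sq2 (Dy Sq2 \<phi>)) p\<bar> \<le> 10 powr -5"
    using bound[of 0 3] by (simp add: numeral_3_eq_3)
qed

lemma Hyp_gradients:
  assumes "3 \<le> M" "Hyp M \<phi>" "p \<in> interior Sq2"
  shows "(px \<phi> has_derivative (\<lambda>(a, b). pxx \<phi> p * a + pxy \<phi> p * b)) (at p)"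
    and "(py \<phi> has_derivative (\<lambda>(a, b). pxy \<phi> p * a + pyy \<phi> p * b)) (at p)"
proof -
  have "Ck_inside (Suc (Suc 0)) Sq2 \<phi>"
    using Ck_inside_mono[OF Hyp_Ck_inside_3[OF assms(1,2)]] by simp
  then have "Ck_inside (Suc 0) Sq2 (px \<phi>)" "Ck_inside (Suc 0) Sq2 (py \<phi>)"
    unfolding px_def py_def by (rule Ck_inside_Suc_partials)+
  moreover have "pyx \<phi> p = pxy \<phi> p"
    using Ck_inside_mixed_partials_eq[OF Ck_inside_mono[OF Hyp_Ck_inside_3[OF assms(1,2)]] assms(3)]
    by (simp add: pxy_def pyx_def)
  ultimately show "(px \<phi> has_derivative (\<lambda>(a, b). pxx \<phi> p * a + pxy \<phi> p * b)) (at p)"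
    "(py \<phi> has_derivative (\<lambda>(a, b). pxy \<phi> p * a + pyy \<phi> p * b)) (at p)"
    using Ck_inside_Suc_has_derivative[OF _ assms(3)]
    unfolding px_def py_def pxx_def pxy_def pyx_def pyy_def by metis+
qed

lemma Hyp_hessian_near_origin:
  assumes "3 \<le> M" "Hyp M \<phi>" "q \<in> Sq"
  shows "\<bar>pxx \<phi> q\<bar> \<le> 1/1000" "\<bar>pxy \<phi> q - 1\<bar> \<le> 1/1000" "\<bar>pyy \<phi> q\<bar> \<le> 1/1000"
proof -
  obtain x y where q: "q = (x, y)" by fastforce
  have at0: "pxx \<phi> (0, 0) = 0" "pxy \<phi> (0, 0) = 1" "pyy \<phi> (0, 0) = 0"
    using assms(2) by (simp_all add: Hyp_def)
  have "2 * 10 powr -5 \<le> (1/1000 :: real)"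
    by (simp add: powr_minus powr_numeral)
  moreover note grad = Ck_inside_3_hessian_gradients[OF Hyp_Ck_inside_3[OF assms(1,2)]
      Sq_subset_interior_Sq2[THEN subsetD]]
  moreover note third = Hyp_third_partials_bound[OF assms(1,2) Sq_subset_interior_Sq2[THEN subsetD,
      THEN interior_subset[THEN subsetD]]]
  ultimately show "\<bar>pxx \<phi> q\<bar> \<le> 1/1000" "\<bar>pxy \<phi> q - 1\<bar> \<le> 1/1000" "\<bar>pyy \<phi> q\<bar> \<le> 1/1000"
    using abs_diff_origin_le_Sq[OF grad(1) third(1,2), of x y]
      abs_diff_origin_le_Sq[OF grad(2) third(2,3), of x y]
      abs_diff_origin_le_Sq[OF grad(3) third(3,4), of x y]
    using assms(3) at0 by (simp_all add: q pxx_def pxy_def pyy_def)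
qed

lemma abs_Afun_le:
  assumes "3 \<le> M" "Hyp M \<phi>" "q \<in> Sq"
  shows "\<bar>Afun \<phi> q\<bar> \<le> 2/1000"
  using small_root_quadratic(1)[OF Hyp_hessian_near_origin[OF assms]]
  by (simp add: Afun_def Hdisc_def)

section \<open>Tangents to the level curves of t\<close>

lemma tt_has_derivative:
  assumes "3 \<le> M" "Hyp M \<phi>" "z \<in> Sq"
  shows "(tt \<phi> z1 has_derivative (\<lambda>(a, b).
            (pxy \<phi> z - Afun \<phi> z1 * pxx \<phi> z) * a + (pyy \<phi> z - Afun \<phi> z1 * pxy \<phi> z) * b)) (at z)"
proof -
  note grad = Hyp_gradients[OF assms(1,2) Sq_subset_interior_Sq2[THEN subsetD, OF assms(3)]]
  have "(tt \<phi> z1 has_derivative (\<lambda>w. (\<lambda>(a, b). pxy \<phi> z * a + pyy \<phi> z * b) w - 0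
          - Afun \<phi> z1 * ((\<lambda>(a, b). pxx \<phi> z * a + pxy \<phi> z * b) w - 0))) (at z)"
    unfolding tt_def[abs_def]
    by (intro has_derivative_diff has_derivative_mult_right has_derivative_const grad)
  then show ?thesis
    by (rule has_derivative_eq_rhs) (auto simp: fun_eq_iff algebra_simps)
qed

lemma Hyp_level_curve_slope:
  assumes "3 \<le> M" "Hyp M \<phi>" "z1 \<in> Sq" "(g y, y) \<in> Sq" "y \<in> {-1..1}"
    and level: "\<And>t. t \<in> {-1..1} \<Longrightarrow> tt \<phi> z1 (g t, t) = v"
    and dg: "(g has_real_derivative s) (at y within {-1..1})"
  shows "\<bar>s + Afun \<phi> z1\<bar> \<le> 3 * \<bar>Afun \<phi> (g y, y) - Afun \<phi> z1\<bar>"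
proof -
  let ?z = "(g y, y)" and ?A1 = "Afun \<phi> z1"
  have "(pxy \<phi> ?z - ?A1 * pxx \<phi> ?z) * s + (pyy \<phi> ?z - ?A1 * pxy \<phi> ?z) = 0"
    using level_curve_tangent[OF tt_has_derivative[OF assms(1,2,4)] dg _ assms(5) level] by simp
  then show ?thesis
    using slope_perturbation_bound[OF Hyp_hessian_near_origin[OF assms(1,2,4)]
        abs_Afun_le[OF assms(1-3)]]
    by (simp add: Afun_def Hdisc_def)
qed

lemma level_set_parametrization:
  assumes "\<forall>v\<in>V. \<forall>y\<in>Y. t (h v y, y) = v" "S \<subseteq> (\<lambda>(v, y). (h v y, y)) ` (V \<times> Y)"
  shows "{z\<in>S. P (t z)} = {(h v y, y) | v y. v \<in> V \<and> P v \<and> y \<in> Y} \<inter> S"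
proof (intro set_eqI iffI)
  fix z assume z: "z \<in> {z\<in>S. P (t z)}"
  then obtain v y where "v \<in> V" "y \<in> Y" "z = (h v y, y)"
    using assms(2) by auto
  then show "z \<in> {(h v y, y) | v y. v \<in> V \<and> P v \<and> y \<in> Y} \<inter> S"
    using z assms(1) by auto
next
  fix z assume "z \<in> {(h v y, y) | v y. v \<in> V \<and> P v \<and> y \<in> Y} \<inter> S"
  then show "z \<in> {z\<in>S. P (t z)}"
    using assms(1) by auto
qed

lemma level_curves_tangent_estimate:
  assumes "3 \<le> M" "Hyp M \<phi>" "z1 \<in> Sq"
    and inv: "\<forall>v\<in>V. \<forall>y\<in>{-1..1}. tt \<phi> z1 (h v y, y) = v"
    and cover: "Sq \<subseteq> (\<lambda>(v, y). (h v y, y)) ` (V \<times> {-1..1})"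
    and dh: "\<forall>v\<in>V. \<forall>y\<in>{-1..1}.
        ((\<lambda>(a, b). h a b) has_derivative (\<lambda>(da, db). hv v y * da + hy v y * db))
          (at (v, y) within (V \<times> {-1..1}))"
  shows
     "let A1 = Afun \<phi> z1;
          RI = {z\<in>Sq. \<bar>tt \<phi> z1 z\<bar> \<le> 100 * sqrt \<mu> / K};
          RII = {z\<in>Sq. \<bar>Afun \<phi> z - A1\<bar> \<le> sqrt \<mu> * K powr (-3/4)}
      in RI = {(h v y, y) | v y. v \<in> V \<and> \<bar>v\<bar> \<le> 100 * sqrt \<mu> / K \<and> y \<in> {-1..1}} \<inter> Sq
       \<and> (\<forall>v\<in>V. \<forall>y\<in>{-1..1}.
            (h v y, y) \<in> RI \<inter> RII \<longrightarrow>
            norm ((hy v y, 1::real) - (- A1, 1)) \<le> 3 * sqrt \<mu> * K powr (-3/4))"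
  unfolding Let_def
proof (intro conjI ballI impI)
  show "{z\<in>Sq. \<bar>tt \<phi> z1 z\<bar> \<le> 100 * sqrt \<mu> / K}
      = {(h v y, y) | v y. v \<in> V \<and> \<bar>v\<bar> \<le> 100 * sqrt \<mu> / K \<and> y \<in> {-1..1}} \<inter> Sq"
    using level_set_parametrization[OF inv cover] .
next
  fix v y
  assume v: "v \<in> V" and y: "y \<in> {-1..1}"
    and z: "(h v y, y) \<in> {z\<in>Sq. \<bar>tt \<phi> z1 z\<bar> \<le> 100 * sqrt \<mu> / K}
      \<inter> {z\<in>Sq. \<bar>Afun \<phi> z - Afun \<phi> z1\<bar> \<le> sqrt \<mu> * K powr (-3/4)}"
  have "((\<lambda>t. h v t) has_real_derivative hy v y) (at y within {-1..1})"
    using has_field_derivative_partial_y[OF dh[rule_format, OF v y], of "{-1..1}"] v by auto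
  then have "\<bar>hy v y + Afun \<phi> z1\<bar> \<le> 3 * \<bar>Afun \<phi> (h v y, y) - Afun \<phi> z1\<bar>"
    using Hyp_level_curve_slope[OF assms(1-3) _ y] z inv v by auto
  then show "norm ((hy v y, 1::real) - (- Afun \<phi> z1, 1)) \<le> 3 * sqrt \<mu> * K powr (-3/4)"
    using z by (simp add: norm_Pair)
qed

theorem mainTheorem11:
  "\<exists>K0::real. \<forall>(M::nat) \<phi> z1 (\<mu>::real) (K::real)
       (h::real \<Rightarrow> real \<Rightarrow> real) (hv::real \<Rightarrow> real \<Rightarrow> real) (hy::real \<Rightarrow> real \<Rightarrow> real).
     3 \<le> M \<and> Hyp M \<phi> \<and> z1 \<in> Sq \<and> 1 \<le> \<mu> \<and> K0 \<le> K \<and>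
     (\<forall>v\<in>{talpha \<phi> z1..tbeta \<phi> z1}. \<forall>y\<in>{-1..1}. tt \<phi> z1 (h v y, y) = v) \<and>
     inj_on (\<lambda>(v, y). (h v y, y)) ({talpha \<phi> z1..tbeta \<phi> z1} \<times> {-1..1}) \<and>
     Sq \<subseteq> (\<lambda>(v, y). (h v y, y)) ` ({talpha \<phi> z1..tbeta \<phi> z1} \<times> {-1..1}) \<and>
     (\<forall>v\<in>{talpha \<phi> z1..tbeta \<phi> z1}. \<forall>y\<in>{-1..1}.
        ((\<lambda>(a, b). h a b) has_derivative (\<lambda>(da, db). hv v y * da + hy v y * db))
          (at (v, y) within ({talpha \<phi> z1..tbeta \<phi> z1} \<times> {-1..1}))) \<and>
     continuous_on ({talpha \<phi> z1..tbeta \<phi> z1} \<times> {-1..1}) (\<lambda>(v, y). hv v y) \<and>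
     continuous_on ({talpha \<phi> z1..tbeta \<phi> z1} \<times> {-1..1}) (\<lambda>(v, y). hy v y) \<and>
     (\<forall>v\<in>{talpha \<phi> z1..tbeta \<phi> z1}. \<forall>y\<in>{-1..1}. hv v y \<noteq> 0)
   \<longrightarrow>
     (let A1 = Afun \<phi> z1;
          RI = {z\<in>Sq. \<bar>tt \<phi> z1 z\<bar> \<le> 100 * sqrt \<mu> / K};
          RII = {z\<in>Sq. \<bar>Afun \<phi> z - A1\<bar> \<le> sqrt \<mu> * K powr (-3/4)}
      in RI = {(h v y, y) | v y. v \<in> {talpha \<phi> z1..tbeta \<phi> z1} \<and>
                                  \<bar>v\<bar> \<le> 100 * sqrt \<mu> / K \<and> y \<in> {-1..1}} \<inter> Sq
       \<and> (\<forall>v\<in>{talpha \<phi> z1..tbeta \<phi> z1}. \<forall>y\<in>{-1..1}.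
            (h v y, y) \<in> RI \<inter> RII \<longrightarrow>
            norm ((hy v y, 1::real) - (- A1, 1)) \<le> 3 * sqrt \<mu> * K powr (-3/4)))"
  by (intro exI[of _ 0] allI impI, elim conjE) (rule level_curves_tangent_estimate)

end
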